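(* Let $M\in\mathcal{M}$ be delay-free with $\mathrm{Supp}(M)=\{i_1,\dots,i_k\}$, where $i_1<\dots<i_k$, and denote the rows of $M$ by $M_1,\dots,M_n$. Then the following are equivalent: (a) The $k\times n$ matrix $\widetilde M$ with rows $M_{i_1},\dots,M_{i_k}$ is basic. (b) There exist row vectors $\widehat M_i\in\mathbb{F}[t]^{1\times n}$ for $i\in\{1,\dots,n\}\setminus\{i_1,\dots,i_k\}$ such that the matrix $N\in\mathbb{F}[t]^{n\times n}$ whose $i$-th row is $M_i$ for $i\in\{i_1,\dots,i_k\}$ and $\widehat M_i$ otherwise is a unit of the ring $\mathcal{M}$.
   Context: Let $\mathbb{F}$ be a finite field with $q$ elements and $n\geq 2$ a divisor of $q-1$. $\mathcal{M}=\{(m_{ab})\in\mathbb{F}[t]^{n\times n}\mid m_{ab}(0)=0\text{ for }1\le b<a\le n\}$, a subring of $\mathbb{F}[t]^{n\times n}$. For $M=(m_{ab})\in\mathcal{M}$, $\mathrm{Supp}(M)$ is the set of indices $a$ such that the $a$-th row of $M$ is nonzero, and $M$ is called delay-free if $m_{aa}(0)\ne0$ for all $a\in\mathrm{Supp}(M)$. A matrix $G\in\mathbb{F}[t]^{k\times n}$ is basic if $\mathrm{rank}\,G(\lambda)=k$ for all $\lambda$ in an algebraic closure of $\mathbb{F}$ (equivalently, its $k\times k$ minors are coprime). *)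

theory Defs
  imports "Jordan_Normal_Form.Determinant" "Jordan_Normal_Form.DL_Submatrix"
    "HOL-Computational_Algebra.Polynomial"
begin

text \<open>Matrices over F[t] are 'a poly mat; indices are 0-based (row a of the paper is row a-1 here).\<close>

definition calM :: "nat \<Rightarrow> 'a::field poly mat set" where
  "calM n = {M \<in> carrier_mat n n. \<forall>a<n. \<forall>b<a. poly (M $$ (a, b)) 0 = 0}"

definition unit_calM :: "nat \<Rightarrow> 'a::field poly mat \<Rightarrow> bool" where
  "unit_calM n N \<longleftrightarrow> N \<in> calM n \<and>
     (\<exists>N' \<in> calM n. N * N' = 1\<^sub>m n \<and> N' * N = 1\<^sub>m n)"

definition Supp :: "'a::zero mat \<Rightarrow> nat set" where
  "Supp M = {a. a < dim_row M \<and> row M a \<noteq> 0\<^sub>v (dim_col M)}"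

definition delay_free :: "'a::field poly mat \<Rightarrow> bool" where
  "delay_free M \<longleftrightarrow> (\<forall>a \<in> Supp M. poly (M $$ (a, a)) 0 \<noteq> 0)"

definition basic :: "'a::field poly mat \<Rightarrow> bool" where
  "basic G \<longleftrightarrow> (\<forall>d :: 'a poly.
     (\<forall>J. J \<subseteq> {0..<dim_col G} \<and> card J = dim_row G \<longrightarrow>
          d dvd det (submatrix G UNIV J)) \<longrightarrow> is_unit d)"

end

theory Submission
  imports Defs
begin

text \<open>Column operations over F[t] (a unimodular U) bring the rows S = Supp M into lower
  triangular form supported on the columns S. By Cauchy--Binet the product d of the diagonal of this
  block divides every maximal minor of the rows S, so basicness makes d a unit; the reduced rows then
  extend by unit rows to a matrix of determinant d, and undoing U gives a unimodular completion N0 of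
  the rows S of M. To land in calM, replace N0 by T N0(0)^-1 N0, where T agrees with M(0) on the rows S
  and with the identity elsewhere: M \<in> calM and delay-freeness make T upper triangular with nonzero
  diagonal, hence so are the values at 0 of the new matrix and of its inverse.
  Conversely, the rows S of a unit of calM have a right inverse, and Cauchy--Binet makes every common
  divisor of their maximal minors divide 1.\<close>

section \<open>Submatrices\<close>

lemma pick_less:
  assumes "I \<subseteq> {0..<r}" "i < card I"
  shows "pick I i < r"
  using pick_in_set_le[OF assms(2)] assms(1) by auto

lemma pick_inj_on: "inj_on (pick I) {0..<card I}"
  by (intro inj_onI, metis atLeastLessThan_iff linorder_neqE_nat pick_mono_le less_irrefl)

lemma bij_betw_pick:
  assumes "finite I"
  shows "bij_betw (pick I) {0..<card I} I"
proof -
  have "pick I ` {0..<card I} \<subseteq> I" using pick_in_set_le by auto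
  moreover have "card (pick I ` {0..<card I}) = card I" using card_image[OF pick_inj_on] by simp
  ultimately have "pick I ` {0..<card I} = I" using card_subset_eq[OF assms] by blast
  thus ?thesis using pick_inj_on unfolding bij_betw_def by blast
qed

lemma submatrix_rows_carrier:
  assumes "A \<in> carrier_mat r c" "I \<subseteq> {0..<r}"
  shows "submatrix A I UNIV \<in> carrier_mat (card I) c"
proof -
  have "{i. i < r \<and> i \<in> I} = I" using assms by auto
  thus ?thesis using assms unfolding carrier_mat_def by (simp add: dim_submatrix)
qed

lemma submatrix_rows_index:
  assumes "A \<in> carrier_mat r c" "I \<subseteq> {0..<r}" "i < card I" "j < c"
  shows "submatrix A I UNIV $$ (i,j) = A $$ (pick I i, j)"
proof -
  have "{i. i < r \<and> i \<in> I} = I" using assms by auto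
  thus ?thesis using assms by (subst submatrix_index) (auto simp: pick_UNIV)
qed

lemma submatrix_cols_carrier:
  assumes "A \<in> carrier_mat r c" "J \<subseteq> {0..<c}"
  shows "submatrix A UNIV J \<in> carrier_mat r (card J)"
proof -
  have "{j. j < c \<and> j \<in> J} = J" using assms by auto
  thus ?thesis using assms unfolding carrier_mat_def by (simp add: dim_submatrix)
qed

lemma submatrix_cols_index:
  assumes "A \<in> carrier_mat r c" "J \<subseteq> {0..<c}" "i < r" "j < card J"
  shows "submatrix A UNIV J $$ (i,j) = A $$ (i, pick J j)"
proof -
  have "{j. j < c \<and> j \<in> J} = J" using assms by auto
  thus ?thesis using assms by (subst submatrix_index) (auto simp: pick_UNIV)
qed

lemma row_submatrix_rows:
  assumes "A \<in> carrier_mat r c" "I \<subseteq> {0..<r}" "i < card I"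
  shows "row (submatrix A I UNIV) i = row A (pick I i)"
  using assms submatrix_rows_carrier[OF assms(1,2)] pick_less[OF assms(2,3)]
  by (intro eq_vecI) (auto simp: submatrix_rows_index)

lemma col_submatrix_cols:
  assumes "A \<in> carrier_mat r c" "J \<subseteq> {0..<c}" "j < card J"
  shows "col (submatrix A UNIV J) j = col A (pick J j)"
  using assms submatrix_cols_carrier[OF assms(1,2)] pick_less[OF assms(2,3)]
  by (intro eq_vecI) (auto simp: submatrix_cols_index)

lemma submatrix_rows_eqI:
  assumes "A \<in> carrier_mat r c" "B \<in> carrier_mat r c" "I \<subseteq> {0..<r}"
    and "\<And>i. i \<in> I \<Longrightarrow> row A i = row B i"
  shows "submatrix A I UNIV = submatrix B I UNIV"
proof (rule eq_matI)
  fix i j assume "i < dim_row (submatrix B I UNIV)" "j < dim_col (submatrix B I UNIV)"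
  hence ij: "i < card I" "j < c" using submatrix_rows_carrier[OF assms(2,3)] by auto
  have "row A (pick I i) $ j = row B (pick I i) $ j" using assms(4) pick_in_set_le[OF ij(1)] by simp
  thus "submatrix A I UNIV $$ (i, j) = submatrix B I UNIV $$ (i, j)"
    using assms(1-3) ij pick_less[OF assms(3) ij(1)] by (simp add: submatrix_rows_index)
qed (use submatrix_rows_carrier[OF assms(1,3)] submatrix_rows_carrier[OF assms(2,3)] in auto)

lemma submatrix_rows_mult:
  assumes A: "A \<in> carrier_mat r n" and B: "B \<in> carrier_mat n c" and I: "I \<subseteq> {0..<r}"
  shows "submatrix (A * B) I UNIV = submatrix A I UNIV * B"
  using submatrix_rows_carrier[OF A I] submatrix_rows_carrier[OF mult_carrier_mat[OF A B] I] A B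
    pick_less[OF I]
  by (intro eq_matI) (auto simp: submatrix_rows_index[OF mult_carrier_mat[OF A B] I]
      row_submatrix_rows[OF A I])

lemma submatrix_cols_mult:
  assumes A: "A \<in> carrier_mat r n" and B: "B \<in> carrier_mat n c" and J: "J \<subseteq> {0..<c}"
  shows "submatrix (A * B) UNIV J = A * submatrix B UNIV J"
  using submatrix_cols_carrier[OF B J] submatrix_cols_carrier[OF mult_carrier_mat[OF A B] J] A B
    pick_less[OF J]
  by (intro eq_matI) (auto simp: submatrix_cols_index[OF mult_carrier_mat[OF A B] J]
      col_submatrix_cols[OF B J])

lemma submatrix_transpose:
  assumes A: "A \<in> carrier_mat r c" and J: "J \<subseteq> {0..<c}"
  shows "submatrix A\<^sup>T J UNIV = (submatrix A UNIV J)\<^sup>T"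
  using submatrix_rows_carrier[OF transpose_carrier_mat[THEN iffD2, OF A] J] submatrix_cols_carrier[OF A J] A
    pick_less[OF J]
  by (intro eq_matI) (auto simp: submatrix_rows_index[OF transpose_carrier_mat[THEN iffD2, OF A] J]
      submatrix_cols_index[OF A J])

lemma submatrix_rows_mult_cols_one:
  assumes A: "A \<in> carrier_mat n n" and B: "B \<in> carrier_mat n n" and AB: "A * B = 1\<^sub>m n"
    and I: "I \<subseteq> {0..<n}"
  shows "submatrix A I UNIV * submatrix B UNIV I = 1\<^sub>m (card I)"
proof (rule eq_matI)
  fix i j assume "i < dim_row (1\<^sub>m (card I))" "j < dim_col (1\<^sub>m (card I))"
  hence ij: "i < card I" "j < card I" by auto
  have "(submatrix A I UNIV * submatrix B UNIV I) $$ (i,j) = (A * B) $$ (pick I i, pick I j)"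
    using submatrix_rows_carrier[OF A I] submatrix_cols_carrier[OF B I] A B ij pick_less[OF I]
    by (simp add: row_submatrix_rows[OF A I] col_submatrix_cols[OF B I])
  also have "\<dots> = 1\<^sub>m (card I) $$ (i,j)"
    using AB ij pick_less[OF I] inj_on_eq_iff[OF pick_inj_on[of I], of i j] by auto
  finally show "(submatrix A I UNIV * submatrix B UNIV I) $$ (i,j) = 1\<^sub>m (card I) $$ (i,j)" .
qed (use submatrix_rows_carrier[OF A I] submatrix_cols_carrier[OF B I] in auto)

section \<open>Maximal minors of products\<close>

lemma minor_dvd_det_rows:
  fixes B :: "'a::comm_ring_1 mat"
  assumes B: "B \<in> carrier_mat n k" and f: "inj_on f {0..<k}" "f ` {0..<k} \<subseteq> {0..<n}"
  shows "det (submatrix B (f ` {0..<k}) UNIV) dvd det (mat\<^sub>r k k (\<lambda>i. row B (f i)))"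
proof -
  define J where "J = f ` {0..<k}"
  have cJ: "card J = k" unfolding J_def using card_image[OF f(1)] by simp
  have J: "J \<subseteq> {0..<n}" using f(2) unfolding J_def .
  have f_less: "f i < n" if "i < k" for i using f(2) that by fastforce
  define p where "p i = (if i < k then card {a\<in>J. a < f i} else i)" for i
  \<comment> \<open>p i is the position of row f i among the rows J in increasing order\<close>
  have pick_p: "pick J (p i) = f i" if "i < k" for i
    using that pick_card_in_set[of "f i" J] unfolding p_def J_def by auto
  have p_less: "p i < k" if "i < k" for i
  proof -
    have "{a\<in>J. a < f i} \<subset> J" using that unfolding J_def by auto
    thus ?thesis using that cJ psubset_card_mono[OF finite_subset[OF J]] unfolding p_def by auto
  qed
  have "inj_on p {0..<k}"
    by (intro inj_onI, metis pick_p f(1) inj_onD atLeastLessThan_iff)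
  moreover have "p i = i" if "i \<notin> {0..<k}" for i using that unfolding p_def by simp
  ultimately have p: "p permutes {0..<k}"
    by (intro inj_on_nat_permutes) (auto simp: p_less)
  define C where "C = submatrix B J UNIV"
  have C: "C \<in> carrier_mat k k" unfolding C_def using submatrix_rows_carrier[OF B J] cJ by simp
  have "mat\<^sub>r k k (\<lambda>i. row B (f i)) = mat k k (\<lambda>(i, j). C $$ (p i, j))"
    using B cJ p_less pick_p f_less
    by (intro eq_matI) (auto simp: C_def submatrix_rows_index[OF B J])
  hence "det (mat\<^sub>r k k (\<lambda>i. row B (f i))) = signof p * det C"
    using det_permute_rows[OF C p] by simp
  thus ?thesis unfolding C_def J_def by simp
qed

text \<open>The divisibility half of the Cauchy--Binet formula.\<close>

lemma dvd_det_mult_of_dvd_row_minors: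
  fixes A B :: "'a::comm_ring_1 mat"
  assumes A: "A \<in> carrier_mat k n" and B: "B \<in> carrier_mat n k"
    and minors: "\<And>J. J \<subseteq> {0..<n} \<Longrightarrow> card J = k \<Longrightarrow> d dvd det (submatrix B J UNIV)"
  shows "d dvd det (A * B)"
proof -
  let ?F = "{f. (\<forall>i\<in>{0..<k}. f i \<in> {0..<n}) \<and> (\<forall>i. i \<notin> {0..<k} \<longrightarrow> f i = i)}"
  have "det (A * B) = (\<Sum>f\<in>?F. det (mat\<^sub>r k k (\<lambda>i. A $$ (i, f i) \<cdot>\<^sub>v row B (f i))))"
    unfolding mat_mul_finsum_alt[OF A B] by (rule det_linear_rows_sum) (use B in auto)
  also have "d dvd \<dots>"
  proof (rule dvd_sum)
    fix f assume f: "f \<in> ?F"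
    have "d dvd det (mat\<^sub>r k k (\<lambda>i. row B (f i)))"
    proof (cases "inj_on f {0..<k}")
      case True
      have "f ` {0..<k} \<subseteq> {0..<n}" using f by auto
      thus ?thesis
        using minors card_image[OF True] minor_dvd_det_rows[OF B True] dvd_trans by fastforce
    next
      case False
      then obtain i j where ij: "f i = f j" "i \<noteq> j" "i < k" "j < k" unfolding inj_on_def by auto
      have "det (mat\<^sub>r k k (\<lambda>i. row B (f i))) = 0"
        by (rule det_identical_rows[OF _ ij(2-4)]) (use ij in auto)
      thus ?thesis by simp
    qed
    moreover have "det (mat\<^sub>r k k (\<lambda>i. A $$ (i, f i) \<cdot>\<^sub>v row B (f i)))
        = (\<Prod>i\<in>{0..<k}. A $$ (i, f i)) * det (mat\<^sub>r k k (\<lambda>i. row B (f i)))"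
      by (rule det_rows_mul) (use B in auto)
    ultimately show "d dvd det (mat\<^sub>r k k (\<lambda>i. A $$ (i, f i) \<cdot>\<^sub>v row B (f i)))" by simp
  qed
  finally show ?thesis .
qed

lemma dvd_det_mult_of_dvd_col_minors:
  fixes A B :: "'a::comm_ring_1 mat"
  assumes A: "A \<in> carrier_mat k n" and B: "B \<in> carrier_mat n k"
    and minors: "\<And>J. J \<subseteq> {0..<n} \<Longrightarrow> card J = k \<Longrightarrow> d dvd det (submatrix A UNIV J)"
  shows "d dvd det (A * B)"
proof -
  have "d dvd det (B\<^sup>T * A\<^sup>T)"
  proof (rule dvd_det_mult_of_dvd_row_minors)
    fix J assume J: "J \<subseteq> {0..<n}" "card J = k"
    have "det (submatrix A\<^sup>T J UNIV) = det (submatrix A UNIV J)"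
      using submatrix_transpose[OF A J(1)] det_transpose submatrix_cols_carrier[OF A J(1)] J(2)
      by metis
    thus "d dvd det (submatrix A\<^sup>T J UNIV)" using minors J by simp
  qed (use A B in auto)
  also have "B\<^sup>T * A\<^sup>T = (A * B)\<^sup>T" using A B by (simp add: transpose_mult)
  finally show ?thesis using det_transpose[of "A * B" k] A B by simp
qed

lemma dvd_minors_mult:
  fixes A U :: "'a::comm_ring_1 mat"
  assumes A: "A \<in> carrier_mat k n" and U: "U \<in> carrier_mat n n"
    and minors: "\<And>J. J \<subseteq> {0..<n} \<Longrightarrow> card J = k \<Longrightarrow> d dvd det (submatrix A UNIV J)"
    and J: "J \<subseteq> {0..<n}" "card J = k"
  shows "d dvd det (submatrix (A * U) UNIV J)"
  unfolding submatrix_cols_mult[OF A U J(1)]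
  by (rule dvd_det_mult_of_dvd_col_minors[OF A _ minors]) (use submatrix_cols_carrier[OF U J(1)] J in auto)

lemma basic_of_right_inverse:
  assumes G: "G \<in> carrier_mat k n" and W: "W \<in> carrier_mat n k" and GW: "G * W = 1\<^sub>m k"
  shows "basic G"
  unfolding basic_def
proof (intro allI impI)
  fix d assume "\<forall>J. J \<subseteq> {0..<dim_col G} \<and> card J = dim_row G \<longrightarrow> d dvd det (submatrix G UNIV J)"
  hence "d dvd det (G * W)" using G by (intro dvd_det_mult_of_dvd_col_minors[OF G W]) auto
  thus "is_unit d" using GW by simp
qed

section \<open>Unimodular matrices\<close>

definition unimodular :: "nat \<Rightarrow> 'a::comm_ring_1 mat \<Rightarrow> bool" where
  "unimodular n U \<longleftrightarrow> U \<in> carrier_mat n n \<and> (\<exists>V \<in> carrier_mat n n. U * V = 1\<^sub>m n \<and> V * U = 1\<^sub>m n)"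

lemma unimodular_carrier: "unimodular n U \<Longrightarrow> U \<in> carrier_mat n n"
  unfolding unimodular_def by simp

lemma unimodular_inverseE:
  assumes "unimodular n U"
  obtains V where "unimodular n V" "U * V = 1\<^sub>m n" "V * U = 1\<^sub>m n"
  using assms unfolding unimodular_def by blast

lemma unimodular_one: "unimodular n (1\<^sub>m n)"
  unfolding unimodular_def by (intro conjI bexI[of _ "1\<^sub>m n"]) auto

lemma unimodular_mult:
  assumes "unimodular n U1" "unimodular n U2"
  shows "unimodular n (U1 * U2)"
proof -
  obtain V1 V2 where U: "U1 \<in> carrier_mat n n" "U2 \<in> carrier_mat n n"
    and V: "V1 \<in> carrier_mat n n" "V2 \<in> carrier_mat n n"
    and inv: "U1 * V1 = 1\<^sub>m n" "V1 * U1 = 1\<^sub>m n" "U2 * V2 = 1\<^sub>m n" "V2 * U2 = 1\<^sub>m n"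
    using assms unfolding unimodular_def by blast
  have "U1 * U2 * (V2 * V1) = U1 * (U2 * V2) * V1" "V2 * V1 * (U1 * U2) = V2 * (V1 * U1) * U2"
    using U V by (simp_all add: assoc_mult_mat[of _ n n _ n _ n])
  thus ?thesis unfolding unimodular_def using U V inv by (intro conjI bexI[of _ "V2 * V1"]) auto
qed

lemma unimodular_addrow_mat:
  assumes "k < n" "l < n" "k \<noteq> l"
  shows "unimodular n (addrow_mat n a k l)"
  unfolding unimodular_def using addrow_mat_inv[OF assms, of a] addrow_mat_inv[OF assms, of "-a"]
  by (intro conjI bexI[of _ "addrow_mat n (-a) k l"]) auto

lemma unimodular_swaprows_mat:
  assumes "k < n" "l < n"
  shows "unimodular n (swaprows_mat n k l)"
  unfolding unimodular_def using swaprows_mat_inv[OF assms]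
  by (intro conjI bexI[of _ "swaprows_mat n k l"]) auto

lemma unimodular_of_det_dvd_one:
  fixes Q :: "'a::comm_ring_1 mat"
  assumes Q: "Q \<in> carrier_mat n n" and unit: "det Q dvd 1"
  shows "unimodular n Q"
proof -
  obtain e where e: "1 = det Q * e" using unit by (elim dvdE)
  have adj: "adj_mat Q \<in> carrier_mat n n" "Q * adj_mat Q = det Q \<cdot>\<^sub>m 1\<^sub>m n"
    "adj_mat Q * Q = det Q \<cdot>\<^sub>m 1\<^sub>m n" using adj_mat[OF Q] by auto
  have "Q * (e \<cdot>\<^sub>m adj_mat Q) = 1\<^sub>m n" "(e \<cdot>\<^sub>m adj_mat Q) * Q = 1\<^sub>m n"
    using Q adj e by (auto simp: mult_smult_distrib mult_smult_assoc_mat mult.commute intro!: eq_matI)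
  thus ?thesis unfolding unimodular_def using Q adj by (intro conjI bexI[of _ "e \<cdot>\<^sub>m adj_mat Q"]) auto
qed

lemma basic_rows_of_unimodular:
  fixes N :: "'a::field poly mat"
  assumes N: "unimodular n N" and S: "S \<subseteq> {0..<n}"
  shows "basic (submatrix N S UNIV)"
proof -
  obtain N' where N': "unimodular n N'" "N * N' = 1\<^sub>m n" using unimodular_inverseE[OF N] by blast
  note carriers = unimodular_carrier[OF N] unimodular_carrier[OF N'(1)]
  show ?thesis
    by (rule basic_of_right_inverse[OF submatrix_rows_carrier[OF carriers(1) S]
          submatrix_cols_carrier[OF carriers(2) S] submatrix_rows_mult_cols_one[OF carriers N'(2) S]])
qed

lemma (in comm_ring_hom) unimodular_mat_hom:
  assumes "unimodular n U"
  shows "unimodular n (mat\<^sub>h U)"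
proof -
  obtain V where U: "U \<in> carrier_mat n n" and V: "V \<in> carrier_mat n n"
    and inv: "U * V = 1\<^sub>m n" "V * U = 1\<^sub>m n" using assms unfolding unimodular_def by blast
  have "mat\<^sub>h U * mat\<^sub>h V = 1\<^sub>m n" "mat\<^sub>h V * mat\<^sub>h U = 1\<^sub>m n"
    using mat_hom_mult[OF U V, symmetric] mat_hom_mult[OF V U, symmetric] inv by (simp_all add: mat_hom_one)
  thus ?thesis unfolding unimodular_def using U V by (intro conjI bexI[of _ "mat\<^sub>h V"]) auto
qed

section \<open>Column reduction over F[t]\<close>

definition row_size :: "'a::zero poly mat \<Rightarrow> nat \<Rightarrow> nat set \<Rightarrow> nat" where
  "row_size X i F = (\<Sum>j\<in>F. if X $$ (i,j) = 0 then 0 else Suc (degree (X $$ (i,j))))"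

lemma row_size_less:
  assumes F: "finite F" "j \<in> F" and nz: "X $$ (i,j) \<noteq> 0"
    and smaller: "Y $$ (i,j) = 0 \<or> degree (Y $$ (i,j)) < degree (X $$ (i,j))"
    and same: "\<And>b. b \<in> F \<Longrightarrow> b \<noteq> j \<Longrightarrow> Y $$ (i,b) = X $$ (i,b)"
  shows "row_size Y i F < row_size X i F"
proof -
  have "(if Y $$ (i,b) = 0 then 0 else Suc (degree (Y $$ (i,b))))
      \<le> (if X $$ (i,b) = 0 then 0 else Suc (degree (X $$ (i,b))))" if "b \<in> F" for b
    using that nz smaller same[of b] by (cases "b = j") auto
  thus ?thesis unfolding row_size_def
    by (intro sum_strict_mono_ex1[OF F(1)]) (use F nz smaller in auto)
qed

lemma mult_addrow_mat_index:
  fixes X :: "'a::comm_semiring_1 mat"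
  assumes "X \<in> carrier_mat r n" "p < n" "a < r" "b < n"
  shows "(X * addrow_mat n x p j) $$ (a,b) = (if b = j then x * X $$ (a,p) + X $$ (a,b) else X $$ (a,b))"
  using addcol_mat[OF assms(1,2), of x j, symmetric] assms by auto

lemma unimodular_column_mod:
  fixes X :: "'a::euclidean_ring mat"
  assumes X: "X \<in> carrier_mat r n" and i: "i < r" and p: "p < n" and j: "j < n" "j \<noteq> p"
  obtains E where "unimodular n E" "(X * E) $$ (i,j) = X $$ (i,j) mod X $$ (i,p)"
    "\<And>a b. a < r \<Longrightarrow> b < n \<Longrightarrow> b \<noteq> j \<Longrightarrow> (X * E) $$ (a,b) = X $$ (a,b)"
    "\<And>a. a < r \<Longrightarrow> X $$ (a,p) = 0 \<Longrightarrow> row (X * E) a = row X a"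
proof
  let ?E = "addrow_mat n (- (X $$ (i,j) div X $$ (i,p))) p j"
  show "unimodular n ?E" using unimodular_addrow_mat p j by auto
  show "(X * ?E) $$ (i,j) = X $$ (i,j) mod X $$ (i,p)"
    using mult_addrow_mat_index[OF X p i j(1)] by (simp add: mod_div_mult_eq[symmetric] algebra_simps)
  show "(X * ?E) $$ (a,b) = X $$ (a,b)" if "a < r" "b < n" "b \<noteq> j" for a b
    using mult_addrow_mat_index[OF X p that(1,2)] that(3) by simp
  show "row (X * ?E) a = row X a" if "a < r" "X $$ (a,p) = 0" for a
    using mult_addrow_mat_index[OF X p that(1)] that X by (intro eq_vecI) auto
qed

lemma unimodular_clear_row:
  fixes X :: "'a::field poly mat"
  assumes X: "X \<in> carrier_mat r n" and i: "i < r" and F: "F \<subseteq> {0..<n}" and c: "c \<in> F"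
  shows "\<exists>U. unimodular n U \<and> (\<forall>j\<in>F - {c}. (X * U) $$ (i,j) = 0)
    \<and> (\<forall>a<r. (\<forall>j\<in>F. X $$ (a,j) = 0) \<longrightarrow> row (X * U) a = row X a)"
  using X
proof (induction "row_size X i F" arbitrary: X rule: less_induct)
  case less
  note X = less.prems
  show ?case
  proof (cases "\<forall>j\<in>F - {c}. X $$ (i,j) = 0")
    case True
    thus ?thesis using X by (intro exI[of _ "1\<^sub>m n"]) (auto simp: unimodular_one)
  next
    case False
    then obtain p where p: "p \<in> F" "X $$ (i,p) \<noteq> 0"
      and p_min: "\<And>j. j \<in> F \<Longrightarrow> X $$ (i,j) \<noteq> 0 \<Longrightarrow> degree (X $$ (i,p)) \<le> degree (X $$ (i,j))"
      using ex_has_least_nat[of "\<lambda>j. j \<in> F \<and> X $$ (i,j) \<noteq> 0" _ "\<lambda>j. degree (X $$ (i,j))"]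
      by (metis DiffD1)
    show ?thesis
    proof (cases "\<exists>j\<in>F - {p}. X $$ (i,j) \<noteq> 0")
      case True
      then obtain j where j: "j \<in> F" "j \<noteq> p" "X $$ (i,j) \<noteq> 0" by auto
      have pj: "p < n" "j < n" using p(1) j(1) F by auto
      obtain E where E: "unimodular n E" and E_ij: "(X * E) $$ (i,j) = X $$ (i,j) mod X $$ (i,p)"
        and E_other: "\<And>a b. a < r \<Longrightarrow> b < n \<Longrightarrow> b \<noteq> j \<Longrightarrow> (X * E) $$ (a,b) = X $$ (a,b)"
        and E_rows: "\<And>a. a < r \<Longrightarrow> X $$ (a,p) = 0 \<Longrightarrow> row (X * E) a = row X a"
        using unimodular_column_mod[OF X i pj(1,2) j(2)] by blast
      have "row_size (X * E) i F < row_size X i F"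
        using degree_mod_less[OF p(2), of "X $$ (i,j)"] p_min[OF j(1,3)] E_ij E_other i F j
        by (intro row_size_less[OF finite_subset[OF F]]) auto
      moreover have "X * E \<in> carrier_mat r n" using X unimodular_carrier[OF E] by auto
      ultimately obtain U where U: "unimodular n U"
        and U_clears: "\<forall>j\<in>F - {c}. (X * E * U) $$ (i,j) = 0"
        and U_rows: "\<forall>a<r. (\<forall>j\<in>F. (X * E) $$ (a,j) = 0) \<longrightarrow> row (X * E * U) a = row (X * E) a"
        using less.hyps by blast
      have XEU: "X * E * U = X * (E * U)"
        using X unimodular_carrier[OF E] unimodular_carrier[OF U] by simp
      show ?thesis
      proof (intro exI[of _ "E * U"] conjI allI impI)
        show "unimodular n (E * U)" by (rule unimodular_mult[OF E U])
        show "\<forall>j\<in>F - {c}. (X * (E * U)) $$ (i,j) = 0" using U_clears XEU by simp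
        fix a assume a: "a < r" "\<forall>j\<in>F. X $$ (a,j) = 0"
        hence row_a: "row (X * E) a = row X a" using E_rows p(1) by simp
        have "(X * E) $$ (a,b) = 0" if "b \<in> F" for b
          using arg_cong[OF row_a, of "\<lambda>v. v $ b"] a that F X unimodular_carrier[OF E] by auto
        with row_a show "row (X * (E * U)) a = row X a" using U_rows a XEU by simp
      qed
    next
      case False
      have cp: "c < n" "p < n" using c p F by auto
      have XP: "X * swaprows_mat n c p = swapcols c p X" using swapcols_mat[OF X cp] by simp
      show ?thesis
      proof (intro exI[of _ "swaprows_mat n c p"] conjI allI impI ballI)
        show "unimodular n (swaprows_mat n c p)" by (rule unimodular_swaprows_mat[OF cp])
        show "(X * swaprows_mat n c p) $$ (i,j) = 0" if "j \<in> F - {c}" for j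
          using that False X i F c unfolding XP by auto
        show "row (X * swaprows_mat n c p) a = row X a" if "a < r" "\<forall>j\<in>F. X $$ (a,j) = 0" for a
          using that X c p(1) unfolding XP by (intro eq_vecI) auto
      qed
    qed
  qed
qed

definition lower_reduced :: "nat set \<Rightarrow> 'a::zero mat \<Rightarrow> bool" where
  "lower_reduced S X \<longleftrightarrow> (\<forall>s\<in>S. \<forall>j<dim_col X. (j \<notin> S \<or> s < j) \<longrightarrow> X $$ (s,j) = 0)"

lemma unimodular_lower_reduce_rows_below:
  fixes M :: "'a::field poly mat"
  assumes M: "M \<in> carrier_mat n n" and S: "S \<subseteq> {0..<n}"
  shows "t \<le> n \<Longrightarrow> \<exists>U. unimodular n U \<and>
    (\<forall>s\<in>S. s < t \<longrightarrow> (\<forall>j<n. (j \<notin> S \<or> s < j) \<longrightarrow> (M * U) $$ (s,j) = 0))"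
proof (induction t)
  case 0
  thus ?case using unimodular_one by blast
next
  case (Suc t)
  then obtain U where U: "unimodular n U"
    and below: "\<forall>s\<in>S. s < t \<longrightarrow> (\<forall>j<n. (j \<notin> S \<or> s < j) \<longrightarrow> (M * U) $$ (s,j) = 0)" by auto
  show ?case
  proof (cases "t \<in> S")
    case False
    have "\<forall>s\<in>S. s < Suc t \<longrightarrow> (\<forall>j<n. (j \<notin> S \<or> s < j) \<longrightarrow> (M * U) $$ (s,j) = 0)"
      using below False less_Suc_eq by blast
    thus ?thesis using U by blast
  next
    case True
    define X where "X = M * U"
    have X: "X \<in> carrier_mat n n" unfolding X_def using M unimodular_carrier[OF U] by auto
    define F where "F = {j. j < n \<and> (j \<notin> S \<or> t \<le> j)}"
    obtain V where V: "unimodular n V" and clears: "\<forall>j\<in>F - {t}. (X * V) $$ (t,j) = 0"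
      and keeps: "\<forall>a<n. (\<forall>j\<in>F. X $$ (a,j) = 0) \<longrightarrow> row (X * V) a = row X a"
      using unimodular_clear_row[OF X, of t F t] Suc.prems unfolding F_def by fastforce
    have XV: "M * (U * V) = X * V"
      unfolding X_def using M unimodular_carrier[OF U] unimodular_carrier[OF V] by simp
    have "(X * V) $$ (s,j) = 0" if s: "s \<in> S" "s < Suc t" and j: "j < n" "j \<notin> S \<or> s < j" for s j
    proof (cases "s = t")
      case True
      thus ?thesis using clears j \<open>t \<in> S\<close> unfolding F_def by auto
    next
      case False
      hence "s < t" "s < n" using s S by auto
      moreover have "\<forall>j\<in>F. X $$ (s,j) = 0" using below s \<open>s < t\<close> unfolding F_def X_def by auto
      ultimately have row_s: "row (X * V) s = row X s" using keeps by blast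
      have "(X * V) $$ (s,j) = X $$ (s,j)"
        using arg_cong[OF row_s, of "\<lambda>v. v $ j"] X unimodular_carrier[OF V] j(1) \<open>s < n\<close> by simp
      thus ?thesis using below s j \<open>s < t\<close> unfolding X_def by auto
    qed
    thus ?thesis using unimodular_mult[OF U V] XV by metis
  qed
qed

lemma unimodular_lower_reduce:
  fixes M :: "'a::field poly mat"
  assumes M: "M \<in> carrier_mat n n" and S: "S \<subseteq> {0..<n}"
  obtains U where "unimodular n U" "lower_reduced S (M * U)"
proof -
  obtain U where U: "unimodular n U"
    "\<forall>s\<in>S. s < n \<longrightarrow> (\<forall>j<n. (j \<notin> S \<or> s < j) \<longrightarrow> (M * U) $$ (s,j) = 0)"
    using unimodular_lower_reduce_rows_below[OF M S, of n] by auto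
  have "dim_col (M * U) = n" using M unimodular_carrier[OF U(1)] by simp
  hence "lower_reduced S (M * U)" using U(2) S unfolding lower_reduced_def by auto
  with U(1) show ?thesis using that by blast
qed

lemma det_lower_reduced_diagonal_minor:
  assumes X: "X \<in> carrier_mat n n" and S: "S \<subseteq> {0..<n}" and red: "lower_reduced S X"
  shows "det (submatrix (submatrix X S UNIV) UNIV S) = (\<Prod>s\<in>S. X $$ (s,s))"
proof -
  let ?A = "submatrix (submatrix X S UNIV) UNIV S"
  have XS: "submatrix X S UNIV \<in> carrier_mat (card S) n" by (rule submatrix_rows_carrier[OF X S])
  have A: "?A \<in> carrier_mat (card S) (card S)" by (rule submatrix_cols_carrier[OF XS S])
  have A_index: "?A $$ (a,b) = X $$ (pick S a, pick S b)" if "a < card S" "b < card S" for a b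
    using that pick_less[OF S] by (simp add: submatrix_cols_index[OF XS S] submatrix_rows_index[OF X S])
  have "det ?A = prod_list (diag_mat ?A)"
  proof (rule det_lower_triangular[OF _ A])
    fix a b assume "a < b" "b < card S"
    thus "?A $$ (a,b) = 0"
      using A_index pick_mono_le[of b S a] pick_in_set_le[of a S] pick_less[OF S] red X
      unfolding lower_reduced_def by auto
  qed
  also have "\<dots> = (\<Prod>a\<in>{0..<card S}. X $$ (pick S a, pick S a))"
    using A A_index by (simp add: prod_list_diag_prod)
  also have "\<dots> = (\<Prod>s\<in>S. X $$ (s,s))"
    by (rule prod.reindex_bij_betw[OF bij_betw_pick[OF finite_subset[OF S finite_atLeastLessThan]]])
  finally show ?thesis .
qed

lemma det_lower_reduced_other_minor:
  assumes X: "X \<in> carrier_mat n n" and S: "S \<subseteq> {0..<n}" and red: "lower_reduced S X"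
    and J: "J \<subseteq> {0..<n}" "card J = card S" "J \<noteq> S"
  shows "det (submatrix (submatrix X S UNIV) UNIV J) = 0"
proof -
  let ?A = "submatrix (submatrix X S UNIV) UNIV J"
  have XS: "submatrix X S UNIV \<in> carrier_mat (card S) n" by (rule submatrix_rows_carrier[OF X S])
  have A: "?A \<in> carrier_mat (card S) (card S)" using submatrix_cols_carrier[OF XS J(1)] J(2) by simp
  have "\<not> J \<subseteq> S" using card_subset_eq[OF finite_subset[OF S finite_atLeastLessThan]] J by auto
  then obtain j where j: "j \<in> J" "j \<notin> S" by auto
  have jn: "j < n" using j(1) J(1) by auto
  define b where "b = card {a\<in>J. a < j}"
  have "{a\<in>J. a < j} \<subset> J" using j by auto
  hence b: "b < card S" unfolding b_def using psubset_card_mono[OF finite_subset[OF J(1) finite_atLeastLessThan]] J(2) by auto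
  have "?A $$ (a,b) = 0" if "a < card S" for a
  proof -
    have "?A $$ (a,b) = X $$ (pick S a, j)"
      using that b J pick_less[OF S] pick_card_in_set[OF j(1)] jn
      by (simp add: submatrix_cols_index[OF XS J(1)] submatrix_rows_index[OF X S] b_def)
    thus ?thesis using red j J(1) X pick_in_set_le[OF that] unfolding lower_reduced_def by auto
  qed
  hence "det ?A = (\<Sum>a<card S. 0 * cofactor ?A a b)"
    using laplace_expansion_column[OF A b] by simp
  thus ?thesis by simp
qed

lemma lower_reduced_completion:
  assumes X: "X \<in> carrier_mat n n" and S: "S \<subseteq> {0..<n}" and red: "lower_reduced S X"
  obtains Q where "Q \<in> carrier_mat n n" "det Q = (\<Prod>s\<in>S. X $$ (s,s))"
    "\<And>s. s \<in> S \<Longrightarrow> row Q s = row X s"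
proof
  define Q where "Q = mat n n (\<lambda>(i,j). if i \<in> S then X $$ (i,j) else if i = j then 1 else 0)"
  show Q: "Q \<in> carrier_mat n n" unfolding Q_def by simp
  have "det Q = prod_list (diag_mat Q)"
    by (rule det_lower_triangular[OF _ Q]) (use red X in \<open>auto simp: Q_def lower_reduced_def\<close>)
  also have "\<dots> = (\<Prod>i\<in>{0..<n}. Q $$ (i,i))" using Q by (simp add: prod_list_diag_prod)
  also have "\<dots> = (\<Prod>i\<in>{0..<n}. if i \<in> S then X $$ (i,i) else 1)"
    by (rule prod.cong) (auto simp: Q_def)
  also have "\<dots> = (\<Prod>s\<in>S. X $$ (s,s))"
    using S by (simp add: prod.If_cases Int_absorb1)
  finally show "det Q = (\<Prod>s\<in>S. X $$ (s,s))" .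
  show "row Q s = row X s" if "s \<in> S" for s
    using that S X by (intro eq_vecI) (auto simp: Q_def)
qed

lemma basic_rows_extend_to_unimodular:
  fixes M :: "'a::field poly mat"
  assumes M: "M \<in> carrier_mat n n" and S: "S \<subseteq> {0..<n}" and basic: "basic (submatrix M S UNIV)"
  obtains N where "unimodular n N" "\<And>s. s \<in> S \<Longrightarrow> row N s = row M s"
proof -
  obtain U where U: "unimodular n U" and red: "lower_reduced S (M * U)"
    using unimodular_lower_reduce[OF M S] .
  obtain U' where U': "unimodular n U'" "U * U' = 1\<^sub>m n" using unimodular_inverseE[OF U] by blast
  have U'c: "U' \<in> carrier_mat n n" using unimodular_carrier[OF U'(1)] .
  define X where "X = M * U"
  have X: "X \<in> carrier_mat n n" unfolding X_def using M unimodular_carrier[OF U] by auto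
  have XU': "X * U' = M" unfolding X_def using M U'c U'(2) unimodular_carrier[OF U] by simp
  have XS: "submatrix X S UNIV \<in> carrier_mat (card S) n" by (rule submatrix_rows_carrier[OF X S])
  let ?d = "\<Prod>s\<in>S. X $$ (s,s)"
  have "?d dvd det (submatrix (submatrix X S UNIV) UNIV J)" if "J \<subseteq> {0..<n}" "card J = card S" for J
    using det_lower_reduced_diagonal_minor[OF X S] det_lower_reduced_other_minor[OF X S] red that
    unfolding X_def by (cases "J = S") auto
  hence "?d dvd det (submatrix (submatrix M S UNIV) UNIV J)" if "J \<subseteq> {0..<n}" "card J = card S" for J
    using dvd_minors_mult[OF XS U'c _ that] submatrix_rows_mult[OF X U'c S] XU' by simp
  hence "is_unit ?d" using basic submatrix_rows_carrier[OF M S] unfolding basic_def by auto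
  obtain Q where Q: "Q \<in> carrier_mat n n" "det Q = ?d" "\<And>s. s \<in> S \<Longrightarrow> row Q s = row X s"
    using lower_reduced_completion[OF X S] red unfolding X_def by blast
  show thesis
  proof
    have "det Q dvd 1" using Q(2) \<open>is_unit ?d\<close> by simp
    thus "unimodular n (Q * U')" using unimodular_mult[OF unimodular_of_det_dvd_one[OF Q(1)] U'(1)] by simp
    show "row (Q * U') s = row M s" if s: "s \<in> S" for s
    proof -
      have "s < n" using s S by auto
      hence "row (Q * U') s = row (X * U') s" using row_mult[OF Q(1) U'c] row_mult[OF X U'c] Q(3)[OF s] by simp
      thus ?thesis using XU' by simp
    qed
  qed
qed

section \<open>Units of calM\<close>

interpretation eval_0: comm_ring_hom "\<lambda>p::'a::comm_ring_1 poly. poly p 0"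
  by unfold_locales auto

interpretation const_poly: comm_ring_hom "\<lambda>x::'a::comm_ring_1. [:x:]"
  by unfold_locales (auto simp: one_pCons)

lemma unimodular_of_unit_calM: "unit_calM n N \<Longrightarrow> unimodular n N"
  unfolding unit_calM_def calM_def unimodular_def by blast

lemma calM_iff_upper_triangular_at_0:
  "M \<in> calM n \<longleftrightarrow> M \<in> carrier_mat n n \<and> upper_triangular (map_mat (\<lambda>p. poly p 0) M)"
  unfolding calM_def upper_triangular_def by auto

lemma upper_triangular_left_inverse:
  fixes Y T :: "'a::idom mat"
  assumes Y: "Y \<in> carrier_mat n n" and T: "T \<in> carrier_mat n n" and YT: "Y * T = 1\<^sub>m n"
    and upper: "upper_triangular T" and diag: "\<And>i. i < n \<Longrightarrow> T $$ (i,i) \<noteq> 0"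
  shows "upper_triangular Y"
proof -
  have "Y $$ (a,b) = 0" if "a < n" "b < a" for a b
    using that
  proof (induction b arbitrary: a rule: less_induct)
    case (less b)
    have "(Y * T) $$ (a,b) = (\<Sum>l\<in>{0..<n}. Y $$ (a,l) * T $$ (l,b))"
      using Y T less.prems by (auto simp: scalar_prod_def intro!: sum.cong)
    also have "\<dots> = (\<Sum>l\<in>{0..<n}. if l = b then Y $$ (a,b) * T $$ (b,b) else 0)"
    proof (rule sum.cong[OF refl])
      fix l assume "l \<in> {0..<n}"
      thus "Y $$ (a,l) * T $$ (l,b) = (if l = b then Y $$ (a,b) * T $$ (b,b) else 0)"
        using less.IH[of l a] less.prems upper_triangularD[OF upper, of b l] T
        by (cases "l < b") auto
    qed
    also have "\<dots> = Y $$ (a,b) * T $$ (b,b)" using less.prems by simp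
    finally show ?case using YT less.prems diag[of b] by auto
  qed
  thus ?thesis by (intro upper_triangularI) (use Y in auto)
qed

lemma unit_calM_of_unimodular:
  fixes N :: "'a::field poly mat"
  assumes N: "unimodular n N" and upper: "upper_triangular (map_mat (\<lambda>p. poly p 0) N)"
    and diag: "\<And>i. i < n \<Longrightarrow> poly (N $$ (i,i)) 0 \<noteq> 0"
  shows "unit_calM n N"
proof -
  obtain N' where N': "unimodular n N'" "N * N' = 1\<^sub>m n" "N' * N = 1\<^sub>m n"
    using unimodular_inverseE[OF N] by blast
  note carriers = unimodular_carrier[OF N] unimodular_carrier[OF N'(1)]
  have inv_0: "map_mat (\<lambda>p. poly p 0) N' * map_mat (\<lambda>p. poly p 0) N = 1\<^sub>m n"
    using eval_0.mat_hom_mult[OF carriers(2,1), symmetric] N'(3) by (simp add: eval_0.mat_hom_one)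
  have "upper_triangular (map_mat (\<lambda>p. poly p 0) N')"
    by (rule upper_triangular_left_inverse[OF _ _ inv_0 upper]) (use carriers diag in auto)
  hence "N' \<in> calM n" using carriers(2) by (simp add: calM_iff_upper_triangular_at_0)
  moreover have "N \<in> calM n" using carriers(1) upper by (simp add: calM_iff_upper_triangular_at_0)
  ultimately show ?thesis unfolding unit_calM_def using N'(2,3) by blast
qed

lemma eval_0_const_poly_mat: "map_mat (\<lambda>p. poly p 0) (map_mat (\<lambda>x. [:x:]) C) = C"
  by (intro eq_matI) auto

text \<open>The witness is the constant matrix T N0(0)^-1 times N0; it fixes the rows S.\<close>

lemma unimodular_change_value_at_0:
  fixes N0 :: "'a::field poly mat" and T :: "'a mat"
  assumes N0: "unimodular n N0" and T: "unimodular n T" and S: "S \<subseteq> {0..<n}"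
    and rows: "\<And>s. s \<in> S \<Longrightarrow> row T s = row (map_mat (\<lambda>p. poly p 0) N0) s"
  obtains N where "unimodular n N" "map_mat (\<lambda>p. poly p 0) N = T"
    "\<And>s. s \<in> S \<Longrightarrow> row N s = row N0 s"
proof -
  let ?ev = "map_mat (\<lambda>p. poly p 0)" and ?const = "map_mat (\<lambda>x. [:x:])"
  obtain N0' where N0': "unimodular n N0'" "N0 * N0' = 1\<^sub>m n" "N0' * N0 = 1\<^sub>m n"
    using unimodular_inverseE[OF N0] by blast
  note carriers = unimodular_carrier[OF N0] unimodular_carrier[OF N0'(1)] unimodular_carrier[OF T]
  define C where "C = T * ?ev N0'"
  have C: "C \<in> carrier_mat n n" unfolding C_def using carriers by simp
  have ev_inv: "?ev N0 * ?ev N0' = 1\<^sub>m n" "?ev N0' * ?ev N0 = 1\<^sub>m n"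
    using eval_0.mat_hom_mult[OF carriers(1,2), symmetric] eval_0.mat_hom_mult[OF carriers(2,1), symmetric]
      N0'(2,3) by (simp_all add: eval_0.mat_hom_one)
  have N: "unimodular n (?const C * N0)" unfolding C_def
    by (intro unimodular_mult const_poly.unimodular_mat_hom T eval_0.unimodular_mat_hom N0'(1) N0)
  have "?ev (?const C * N0) = C * ?ev N0"
    using eval_0.mat_hom_mult[of "?const C" n n N0 n] C carriers by (simp add: eval_0_const_poly_mat)
  also have "\<dots> = T * (?ev N0' * ?ev N0)" unfolding C_def using carriers by simp
  finally have "?ev (?const C * N0) = T" using ev_inv carriers by simp
  moreover have "row (?const C * N0) s = row N0 s" if s: "s \<in> S" for s
  proof -
    have sn: "s < n" using s S by auto
    have "row C s = row (?ev N0 * ?ev N0') s" unfolding C_def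
      using row_mult[of T n n "?ev N0'" n s] row_mult[of "?ev N0" n n "?ev N0'" n s] carriers sn rows[OF s]
      by simp
    hence C_row: "row C s = row (1\<^sub>m n) s" using ev_inv(1) by simp
    have "row (?const C) s = row (1\<^sub>m n) s"
    proof (rule eq_vecI)
      fix j assume "j < dim_vec (row (1\<^sub>m n) s)"
      hence j: "j < n" by simp
      have "C $$ (s,j) = 1\<^sub>m n $$ (s,j)" using arg_cong[OF C_row, of "\<lambda>v. v $ j"] C sn j by simp
      thus "row (?const C) s $ j = row (1\<^sub>m n) s $ j" using C sn j by (cases "s = j") simp_all
    qed (use C in simp)
    hence "row (?const C * N0) s = row (1\<^sub>m n * N0) s"
      using row_mult[of "?const C" n n N0 n s] row_mult[of "1\<^sub>m n" n n N0 n s] C carriers sn by simp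
    thus ?thesis using carriers by simp
  qed
  ultimately show thesis using that[OF N] by blast
qed

lemma unimodular_to_unit_calM:
  fixes M N0 :: "'a::field poly mat"
  assumes M: "M \<in> calM n" and S: "S \<subseteq> {0..<n}"
    and diag: "\<And>s. s \<in> S \<Longrightarrow> poly (M $$ (s,s)) 0 \<noteq> 0"
    and N0: "unimodular n N0" and rows: "\<And>s. s \<in> S \<Longrightarrow> row N0 s = row M s"
  shows "\<exists>N \<in> carrier_mat n n. (\<forall>s\<in>S. row N s = row M s) \<and> unit_calM n N"
proof -
  have Mc: "M \<in> carrier_mat n n" using M unfolding calM_def by simp
  define T where "T = mat n n (\<lambda>(i,j). if i \<in> S then poly (M $$ (i,j)) 0 else if i = j then 1 else 0)"
  have Tc: "T \<in> carrier_mat n n" unfolding T_def by simp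
  have upper: "upper_triangular T" by (intro upper_triangularI) (use M in \<open>auto simp: T_def calM_def\<close>)
  have T_diag: "T $$ (i,i) \<noteq> 0" if "i < n" for i using that diag unfolding T_def by auto
  have "det T = (\<Prod>i = 0..<n. T $$ (i,i))"
    using det_upper_triangular[OF upper Tc] Tc by (simp add: prod_list_diag_prod)
  hence "det T dvd 1" using T_diag by (simp add: dvd_field_iff)
  hence T: "unimodular n T" by (rule unimodular_of_det_dvd_one[OF Tc])
  have N0_entries: "N0 $$ (s,j) = M $$ (s,j)" if "s \<in> S" "j < n" for s j
    using arg_cong[OF rows[OF that(1)], of "\<lambda>v. v $ j"] that S Mc unimodular_carrier[OF N0] by auto
  have "row T s = row (map_mat (\<lambda>p. poly p 0) N0) s" if "s \<in> S" for s
    using that S unimodular_carrier[OF N0] N0_entries unfolding T_def by (intro eq_vecI) auto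
  then obtain N where N: "unimodular n N" "map_mat (\<lambda>p. poly p 0) N = T"
    and N_rows: "\<And>s. s \<in> S \<Longrightarrow> row N s = row N0 s"
    using unimodular_change_value_at_0[OF N0 T S] by blast
  have "poly (N $$ (i,i)) 0 \<noteq> 0" if "i < n" for i
    using T_diag[OF that] N(2) unimodular_carrier[OF N(1)] that by auto
  hence "unit_calM n N" using unit_calM_of_unimodular[OF N(1)] N(2) upper by blast
  thus ?thesis using N_rows rows unimodular_carrier[OF N(1)] by auto
qed

theorem lemma3p14:
  fixes M :: "'a::{field,finite} poly mat" and n q :: nat
  assumes "card (UNIV :: 'a set) = q" and "n \<ge> 2" and "n dvd q - 1"
    and "M \<in> calM n" and "delay_free M"
  shows "basic (submatrix M (Supp M) UNIV) \<longleftrightarrow>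
    (\<exists>N \<in> carrier_mat n n. (\<forall>i \<in> Supp M. row N i = row M i) \<and> unit_calM n N)"
proof -
  have M: "M \<in> carrier_mat n n" using \<open>M \<in> calM n\<close> unfolding calM_def by simp
  have S: "Supp M \<subseteq> {0..<n}" using M unfolding Supp_def by auto
  show ?thesis
  proof
    assume "basic (submatrix M (Supp M) UNIV)"
    then obtain N0 where "unimodular n N0" "\<And>s. s \<in> Supp M \<Longrightarrow> row N0 s = row M s"
      using basic_rows_extend_to_unimodular[OF M S] by blast
    thus "\<exists>N \<in> carrier_mat n n. (\<forall>i \<in> Supp M. row N i = row M i) \<and> unit_calM n N"
      using unimodular_to_unit_calM[OF \<open>M \<in> calM n\<close> S] \<open>delay_free M\<close>
      unfolding delay_free_def by blast
  next
    assume "\<exists>N \<in> carrier_mat n n. (\<forall>i \<in> Supp M. row N i = row M i) \<and> unit_calM n N"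
    then obtain N where N: "N \<in> carrier_mat n n" "\<forall>i \<in> Supp M. row N i = row M i" "unit_calM n N"
      by blast
    have "submatrix M (Supp M) UNIV = submatrix N (Supp M) UNIV"
      using submatrix_rows_eqI[OF M N(1) S] N(2) by simp
    thus "basic (submatrix M (Supp M) UNIV)"
      using basic_rows_of_unimodular[OF unimodular_of_unit_calM[OF N(3)] S] by simp
  qed
qed

end
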